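(* Let $p\ge5$ be a prime with $\left(\frac{-10}{p}\right)=-1$. Then for every integer $j$ with $0\le j\le p-1$ there exist integers $k,m$ with $0\le k,m\le p-1$ such that \[ 2\cdot \frac{3k^{2}+k}{2}+5 \cdot \frac{3m^{2}+m}{2}\equiv j \pmod p. \]
   Context: $\left(\frac{a}{p}\right)$ is the Legendre symbol. *)

theory Defs
  imports "HOL-Number_Theory.Number_Theory"
begin

end

theory Submission
  imports Defs
begin

text \<open>With \<open>P k = (3k\<^sup>2 + k)/2\<close>, completing the square gives \<open>(6k + 1)\<^sup>2 = 24 P k + 1\<close>,
  so \<open>2 P k + 5 P m \<equiv> j\<close> is equivalent to \<open>2 x\<^sup>2 + 5 y\<^sup>2 \<equiv> 24 j + 7\<close> with
  \<open>x = 6k + 1\<close>, \<open>y = 6m + 1\<close>, once \<open>24\<close> is a unit mod \<open>p\<close>. For an odd prime \<open>p\<close>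
  and units \<open>a\<close>, \<open>b\<close>, the congruence \<open>a x\<^sup>2 + b y\<^sup>2 \<equiv> c\<close> is always solvable:
  \<open>a x\<^sup>2\<close> and \<open>c - b y\<^sup>2\<close> each take \<open>(p + 1)/2\<close> distinct values as \<open>x, y\<close> range over
  \<open>0 .. (p - 1)/2\<close>, so the two sets of residues meet. As \<open>6\<close> is a unit, every
  residue is of the form \<open>6k + 1\<close>. The Legendre hypothesis serves only to
  exclude \<open>p = 5\<close>, where the coefficient \<open>5\<close> vanishes.\<close>

lemma coprime_if_less_prime:
  fixes p n :: int
  assumes "prime p" "0 < n" "n < p"
  shows "coprime n p"
proof -
  have "\<not> p dvd n" using zdvd_imp_le assms(2,3) by fastforce
  thus ?thesis using prime_imp_coprime[OF assms(1)] coprime_commute by blast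
qed

lemma inj_on_affine_square_mod_prime:
  fixes p a c :: int
  assumes "prime p" "coprime a p"
  shows "inj_on (\<lambda>x. (c + a * x^2) mod p) {0..(p - 1) div 2}"
proof (rule inj_onI)
  fix x y assume x: "x \<in> {0..(p - 1) div 2}" and y: "y \<in> {0..(p - 1) div 2}"
    and "(c + a * x^2) mod p = (c + a * y^2) mod p"
  hence "p dvd (c + a * x^2) - (c + a * y^2)" by (simp add: mod_eq_dvd_iff)
  also have "(c + a * x^2) - (c + a * y^2) = a * ((x - y) * (x + y))"
    by (simp add: algebra_simps power2_eq_square)
  finally have "p dvd (x - y) * (x + y)"
    using assms(2) coprime_dvd_mult_right_iff[of p a] by (simp add: coprime_commute)
  hence "p dvd x - y \<or> p dvd x + y" using assms(1) by (simp add: prime_dvd_mult_iff)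
  thus "x = y"
  proof
    assume "p dvd x - y"
    moreover have "\<bar>x - y\<bar> < p" using x y by auto
    ultimately show "x = y" using dvd_imp_le_int[of "x - y" p] by fastforce
  next
    assume "p dvd x + y"
    moreover have "0 \<le> x + y" "x + y < p" using x y by auto
    ultimately have "x + y = 0" using dvd_imp_le_int[of "x + y" p] by fastforce
    thus "x = y" using x y by auto
  qed
qed

lemma cong_scaled_squares_solvable:
  fixes p a b c :: int
  assumes "prime p" "p > 2" "coprime a p" "coprime b p"
  shows "\<exists>x y. [a * x^2 + b * y^2 = c] (mod p)"
proof -
  define I where "I = {0..(p - 1) div 2}"
  \<comment> \<open>both maps written literally as instances of \<open>inj_on_affine_square_mod_prime\<close>\<close>
  define A where "A = (\<lambda>x. (0 + a * x^2) mod p) ` I"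
  define B where "B = (\<lambda>y. (c + (- b) * y^2) mod p) ` I"
  have "odd p" using assms(1,2) prime_odd_int by blast
  hence card_I: "2 * card I = p + 1" using assms(2) unfolding I_def by (auto elim!: oddE)
  have card_A: "card A = card I"
    unfolding A_def I_def by (rule card_image[OF inj_on_affine_square_mod_prime[OF assms(1,3)]])
  have card_B: "card B = card I"
    using assms(4) unfolding B_def I_def
    by (intro card_image inj_on_affine_square_mod_prime[OF assms(1)]) simp
  have "A \<union> B \<subseteq> {0..<p}" using assms(2) unfolding A_def B_def by auto
  hence "card (A \<union> B) \<le> card {0..<p}" by (intro card_mono) auto
  hence card_AB: "card (A \<union> B) \<le> p" using assms(2) by (simp add: le_nat_iff)
  have "A \<inter> B \<noteq> {}"
  proof (intro notI)
    assume "A \<inter> B = {}"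
    hence "card (A \<union> B) = card A + card B"
      by (intro card_Un_disjoint) (simp_all add: A_def B_def I_def)
    thus False using card_A card_B card_AB card_I by linarith
  qed
  then obtain x y where "(a * x^2) mod p = (c - b * y^2) mod p"
    unfolding A_def B_def by auto
  hence "[a * x^2 + b * y^2 = c] (mod p)"
    by (simp add: cong_def mod_eq_dvd_iff algebra_simps)
  thus ?thesis by blast
qed

lemma cong_affine_solvable_in_range:
  fixes p a b x :: int
  assumes "p > 0" "coprime a p"
  shows "\<exists>k. 0 \<le> k \<and> k \<le> p - 1 \<and> [a * k + b = x] (mod p)"
proof -
  obtain u where u: "[a * u = 1] (mod p)" using cong_solve_coprime_int assms(2) by blast
  define k where "k = (u * (x - b)) mod p"
  have "[k = u * (x - b)] (mod p)" unfolding k_def by (simp add: cong_def)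
  hence "[a * k + b = a * u * (x - b) + b] (mod p)"
    unfolding mult.assoc by (intro cong_add cong_mult cong_refl)
  also have "[a * u * (x - b) + b = 1 * (x - b) + b] (mod p)"
    using u by (intro cong_add cong_mult cong_refl)
  finally have "[a * k + b = x] (mod p)" by simp
  moreover have "0 \<le> k" "k \<le> p - 1" using assms(1) unfolding k_def by auto
  ultimately show ?thesis by blast
qed

lemma pentagonal_completed_square:
  fixes k :: int
  shows "(6 * k + 1)^2 = 24 * ((3 * k^2 + k) div 2) + 1"
proof -
  have "3 * k^2 + k = 2 * k^2 + k * (k + 1)" by (simp add: algebra_simps power2_eq_square)
  hence half: "2 * ((3 * k^2 + k) div 2) = 3 * k^2 + k" by simp
  have "(6 * k + 1)^2 = 12 * (3 * k^2 + k) + 1"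
    by (simp add: algebra_simps power2_eq_square)
  also have "\<dots> = 12 * (2 * ((3 * k^2 + k) div 2)) + 1" by (simp only: half)
  finally show ?thesis by (simp only: mult.assoc[symmetric])
qed

lemma pentagonal_combination_surj_mod_prime:
  fixes p j :: int
  assumes "prime p" "p > 5"
  shows "\<exists>k m. 0 \<le> k \<and> k \<le> p - 1 \<and> 0 \<le> m \<and> m \<le> p - 1 \<and>
           [2 * ((3 * k^2 + k) div 2) + 5 * ((3 * m^2 + m) div 2) = j] (mod p)"
proof -
  have coprime: "coprime 2 p" "coprime 3 p" "coprime 5 p"
    using assms coprime_if_less_prime[OF assms(1), of 2] coprime_if_less_prime[OF assms(1), of 3]
      coprime_if_less_prime[OF assms(1), of 5] by simp_all
  hence "coprime (2 * 3) p" "coprime (2 * 2 * 2 * 3) p"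
    by (simp_all only: coprime_mult_left_iff)
  hence "coprime 6 p" "coprime 24 p" by simp_all
  have "p > 2" using assms(2) by simp
  then obtain x y where xy: "[2 * x^2 + 5 * y^2 = 24 * j + 7] (mod p)"
    using cong_scaled_squares_solvable[OF assms(1) _ coprime(1,3)] by blast
  have "p > 0" using assms(2) by simp
  obtain k where k: "0 \<le> k" "k \<le> p - 1" "[6 * k + 1 = x] (mod p)"
    using cong_affine_solvable_in_range[OF \<open>p > 0\<close> \<open>coprime 6 p\<close>] by blast
  obtain m where m: "0 \<le> m" "m \<le> p - 1" "[6 * m + 1 = y] (mod p)"
    using cong_affine_solvable_in_range[OF \<open>p > 0\<close> \<open>coprime 6 p\<close>] by blast
  define E where "E = 2 * ((3 * k^2 + k) div 2) + 5 * ((3 * m^2 + m) div 2)"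
  have "24 * E + 7 = 2 * (6 * k + 1)^2 + 5 * (6 * m + 1)^2"
    unfolding E_def pentagonal_completed_square by (simp only: ring_distribs)
  also have "[\<dots> = 2 * x^2 + 5 * y^2] (mod p)"
    using k(3) m(3) by (intro cong_add cong_mult cong_pow cong_refl)
  also note xy
  finally have "[24 * E = 24 * j] (mod p)" by (rule cong_add_rcancel[THEN iffD1])
  hence "[E = j] (mod p)" using \<open>coprime 24 p\<close> by (simp add: cong_mult_lcancel)
  with k m show ?thesis unfolding E_def by blast
qed

theorem lemma3p18:
  fixes p :: int
  assumes "prime p" and "p \<ge> 5" and "Legendre (-10) p = -1"
  shows "\<forall>j. 0 \<le> j \<and> j \<le> p - 1 \<longrightarrow>
           (\<exists>k m. 0 \<le> k \<and> k \<le> p - 1 \<and> 0 \<le> m \<and> m \<le> p - 1 \<and>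
              [2 * ((3 * k^2 + k) div 2) + 5 * ((3 * m^2 + m) div 2) = j] (mod p))"
proof -
  have "p \<noteq> 5" using assms(3) by (auto simp: Legendre_def cong_def)
  with assms(2) have "p > 5" by simp
  with pentagonal_combination_surj_mod_prime[OF assms(1)] show ?thesis by blast
qed

end
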